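(* Let $(V,\|\cdot\|,V_+)$ be a normal ordered vector space and $S\subseteq V$ a linear subspace, regarded as a normal ordered vector space with the restricted norm and cone $S_+=S\cap V_+$. Then every positive contractive linear functional $f:S\to\mathbb{R}$ has a positive contractive linear extension $\tilde f:V\to\mathbb{R}$ if and only if $d_V(x)=d_S(x)$ for all $x\in S$.
   Context: A normed ordered vector space $(V,\|\cdot\|,V_+)$ is a real normed vector space with a closed proper cone $V_+$ (closed under sums and nonnegative scalings, $V_+\cap(-V_+)=\{0\}$); $x\le y$ iff $y-x\in V_+$. It is normal if $x\le y\le z$ implies $\|y\|\le\max\{\|x\|,\|z\|\}$. For a normed ordered vector space $W$, $d_W(x)=\inf\{\|x+p\|:p\in W_+\}$; thus $d_S(x)=\inf\{\|x+p\|:p\in S\cap V_+\}$ and $d_V(x)=\inf\{\|x+p\|:p\in V_+\}$. A functional is positive if it is nonnegative on the cone and contractive if its norm is at most 1. *)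

theory Defs
  imports "HOL-Analysis.Analysis"
begin

definition closed_proper_cone :: "'a::real_normed_vector set \<Rightarrow> bool" where
  "closed_proper_cone P \<longleftrightarrow> closed P \<and> 0 \<in> P \<and>
     (\<forall>x\<in>P. \<forall>y\<in>P. x + y \<in> P) \<and>
     (\<forall>c::real. \<forall>x\<in>P. c \<ge> 0 \<longrightarrow> c *\<^sub>R x \<in> P) \<and>
     P \<inter> uminus ` P = {0}"

definition normal_cone :: "'a::real_normed_vector set \<Rightarrow> bool" where
  "normal_cone P \<longleftrightarrow>
     (\<forall>x y z. y - x \<in> P \<and> z - y \<in> P \<longrightarrow> norm y \<le> max (norm x) (norm z))"

text \<open>d_W(x) = inf { norm (x + p) : p \<in> W_+ }, where C is the cone W_+.\<close>
definition cone_dist :: "'a::real_normed_vector set \<Rightarrow> 'a \<Rightarrow> real" where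
  "cone_dist C x = Inf ((\<lambda>p. norm (x + p)) ` C)"

text \<open>f is a positive contractive linear functional on the subspace S
  (with cone S \<inter> P and restricted norm); values of f outside S are irrelevant.\<close>
definition pos_contr_functional :: "'a::real_normed_vector set \<Rightarrow> 'a set \<Rightarrow> ('a \<Rightarrow> real) \<Rightarrow> bool" where
  "pos_contr_functional S P f \<longleftrightarrow>
     (\<forall>x\<in>S. \<forall>y\<in>S. f (x + y) = f x + f y) \<and>
     (\<forall>c::real. \<forall>x\<in>S. f (c *\<^sub>R x) = c * f x) \<and>
     (\<forall>p\<in>S \<inter> P. 0 \<le> f p) \<and>
     (\<forall>x\<in>S. \<bar>f x\<bar> \<le> norm x)"

end

theory Submission
  imports Defs
begin

text \<open>For a linear functional g and a convex cone C, g is positive on C and contractive iff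
  g \<le> d_C pointwise (as g x \<le> g (x + q) \<le> \<parallel>x + q\<parallel> for q \<in> C), and d_C is sublinear.
  So everything reduces to Hahn-Banach for sublinear functionals. If d_V = d_S on S, a positive
  contractive f on S lies below d_V on S and extends to a linear g \<le> d_V. Conversely, for x \<in> S
  take a linear h \<le> d_S with h x = d_S x; h is positive and contractive on S, and any positive
  contractive extension g gives d_S x = g x \<le> d_V x, while d_V \<le> d_S holds trivially.\<close>

definition sublinear :: "('a::real_vector \<Rightarrow> real) \<Rightarrow> bool" where
  "sublinear p \<longleftrightarrow> (\<forall>x y. p (x + y) \<le> p x + p y) \<and> (\<forall>c x. 0 < c \<longrightarrow> p (c *\<^sub>R x) = c * p x)"

lemma sublinear_add: "sublinear p \<Longrightarrow> p (x + y) \<le> p x + p y"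
  unfolding sublinear_def by blast

lemma sublinear_scaleR: "sublinear p \<Longrightarrow> 0 < c \<Longrightarrow> p (c *\<^sub>R x) = c * p x"
  unfolding sublinear_def by blast

lemma sublinear_0: "sublinear p \<Longrightarrow> p 0 = 0"
  using sublinear_scaleR[of p 2 0] by simp

lemma sublinear_scaleR_ge: assumes "sublinear p" shows "t * p x \<le> p (t *\<^sub>R x)"
proof (cases "0 < t")
  case True
  then show ?thesis using sublinear_scaleR[OF assms] by simp
next
  case False
  have "0 \<le> p x + p (- x)"
    using sublinear_add[OF assms, of x "- x"] sublinear_0[OF assms] by simp
  then have "t * (p x + p (- x)) \<le> 0"
    using False by (simp add: mult_nonpos_nonneg)
  then have "t * p x \<le> (- t) * p (- x)"
    by (simp add: algebra_simps)
  also have "\<dots> = p (t *\<^sub>R x)"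
    using False sublinear_scaleR[OF assms, of "- t" "- x"] sublinear_0[OF assms]
    by (cases "t = 0") auto
  finally show ?thesis .
qed

text \<open>Partial linear functionals are handled through their graphs, so that Zorn's lemma
  applies to set inclusion.\<close>

definition linear_graph :: "('a::real_vector \<times> real) set \<Rightarrow> bool" where
  "linear_graph G \<longleftrightarrow>
     (\<forall>x a b. (x, a) \<in> G \<longrightarrow> (x, b) \<in> G \<longrightarrow> a = b) \<and>
     (\<forall>x a y b. (x, a) \<in> G \<longrightarrow> (y, b) \<in> G \<longrightarrow> (x + y, a + b) \<in> G) \<and>
     (\<forall>c x a. (x, a) \<in> G \<longrightarrow> (c *\<^sub>R x, c * a) \<in> G)"

lemma linear_graphD:
  assumes "linear_graph G"
  shows linear_graph_unique: "(x, a) \<in> G \<Longrightarrow> (x, b) \<in> G \<Longrightarrow> a = b"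
    and linear_graph_add: "(x, a) \<in> G \<Longrightarrow> (y, b) \<in> G \<Longrightarrow> (x + y, a + b) \<in> G"
    and linear_graph_scaleR: "(x, a) \<in> G \<Longrightarrow> (c *\<^sub>R x, c * a) \<in> G"
  using assms unfolding linear_graph_def by blast+

lemma linear_graph_zero: "linear_graph G \<Longrightarrow> (x, a) \<in> G \<Longrightarrow> (0, 0) \<in> G"
  using linear_graph_scaleR[of G x a 0] by simp

lemma linear_graph_Union_chain:
  assumes graphs: "\<And>G. G \<in> C \<Longrightarrow> linear_graph G"
    and chain: "\<And>G H. G \<in> C \<Longrightarrow> H \<in> C \<Longrightarrow> G \<subseteq> H \<or> H \<subseteq> G"
  shows "linear_graph (\<Union>C)"
proof -
  have two: "\<exists>G\<in>C. u \<in> G \<and> v \<in> G" if "u \<in> \<Union>C" "v \<in> \<Union>C" for u v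
    using that chain by blast
  show ?thesis
    unfolding linear_graph_def
  proof (intro conjI allI impI)
    fix x a b assume "(x, a) \<in> \<Union>C" "(x, b) \<in> \<Union>C"
    then obtain G where "G \<in> C" "(x, a) \<in> G" "(x, b) \<in> G" using two by blast
    then show "a = b" using linear_graph_unique graphs by blast
  next
    fix x a y b assume "(x, a) \<in> \<Union>C" "(y, b) \<in> \<Union>C"
    then obtain G where "G \<in> C" "(x, a) \<in> G" "(y, b) \<in> G" using two by blast
    then show "(x + y, a + b) \<in> \<Union>C" using linear_graph_add graphs by blast
  next
    fix c x a assume "(x, a) \<in> \<Union>C"
    then show "(c *\<^sub>R x, c * a) \<in> \<Union>C" using linear_graph_scaleR graphs by blast
  qed
qed

lemma linear_graph_is_linear:
  assumes "linear_graph G" and total: "\<And>x. \<exists>a. (x, a) \<in> G"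
  obtains g where "linear g" and "\<And>x. (x, g x) \<in> G"
proof
  define g where "g x = (SOME a. (x, a) \<in> G)" for x
  show graph: "(x, g x) \<in> G" for x
    unfolding g_def using total by (rule someI_ex)
  have g_eq: "g x = a" if "(x, a) \<in> G" for x a
    using linear_graph_unique[OF assms(1) graph that] .
  show "linear g"
  proof (rule linearI)
    show "g (x + y) = g x + g y" for x y
      using g_eq linear_graph_add[OF assms(1) graph graph] .
    show "g (c *\<^sub>R x) = c *\<^sub>R g x" for c x
      using g_eq linear_graph_scaleR[OF assms(1) graph] by simp
  qed
qed

lemma linear_graph_extend:
  assumes G: "linear_graph G" and z: "\<And>a. (z, a) \<notin> G"
  shows "linear_graph {(y + t *\<^sub>R z, a + t * c) | y a t. (y, a) \<in> G}" (is "linear_graph ?G'")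
  unfolding linear_graph_def
proof (intro conjI allI impI)
  fix x a b
  assume "(x, a) \<in> ?G'" and "(x, b) \<in> ?G'"
  then obtain y1 a1 t1 y2 a2 t2 where h: "(y1, a1) \<in> G" "(y2, a2) \<in> G"
    "x = y1 + t1 *\<^sub>R z" "a = a1 + t1 * c" "x = y2 + t2 *\<^sub>R z" "b = a2 + t2 * c"
    by blast
  have "t1 = t2"
  proof (rule ccontr)
    assume "t1 \<noteq> t2"
    have "(y1 + (-1) *\<^sub>R y2, a1 + (-1) * a2) \<in> G"
      using linear_graph_add[OF G h(1) linear_graph_scaleR[OF G h(2)]] .
    from linear_graph_scaleR[OF G this, of "1 / (t2 - t1)"]
    have "((1 / (t2 - t1)) *\<^sub>R (y1 - y2), (a1 - a2) / (t2 - t1)) \<in> G"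
      by simp
    moreover have "y1 - y2 = (t2 - t1) *\<^sub>R z"
      using h(3,5) by (simp add: algebra_simps)
    ultimately show False
      using z \<open>t1 \<noteq> t2\<close> by simp
  qed
  with h show "a = b"
    using linear_graph_unique[OF G] by auto
next
  fix x a y b
  assume "(x, a) \<in> ?G'" and "(y, b) \<in> ?G'"
  then obtain y1 a1 t1 y2 a2 t2 where h: "(y1, a1) \<in> G" "(y2, a2) \<in> G"
    "x = y1 + t1 *\<^sub>R z" "a = a1 + t1 * c" "y = y2 + t2 *\<^sub>R z" "b = a2 + t2 * c"
    by blast
  have "(x + y, a + b) = ((y1 + y2) + (t1 + t2) *\<^sub>R z, (a1 + a2) + (t1 + t2) * c)"
    using h by (simp add: algebra_simps)
  with linear_graph_add[OF G h(1,2)]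
  show "(x + y, a + b) \<in> ?G'"
    by blast
next
  fix d x a
  assume "(x, a) \<in> ?G'"
  then obtain y1 a1 t1 where h: "(y1, a1) \<in> G" "x = y1 + t1 *\<^sub>R z" "a = a1 + t1 * c"
    by blast
  have "(d *\<^sub>R x, d * a) = (d *\<^sub>R y1 + (d * t1) *\<^sub>R z, d * a1 + (d * t1) * c)"
    using h by (simp add: algebra_simps)
  with linear_graph_scaleR[OF G h(1)]
  show "(d *\<^sub>R x, d * a) \<in> ?G'"
    by blast
qed

lemma sublinear_extension_value:
  assumes p: "sublinear p" and G: "linear_graph G" and "G \<noteq> {}"
    and dom: "\<And>x a. (x, a) \<in> G \<Longrightarrow> a \<le> p x"
  obtains c where "\<And>y a t. (y, a) \<in> G \<Longrightarrow> a + t * c \<le> p (y + t *\<^sub>R z)"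
proof
  obtain x1 a1 where "(x1, a1) \<in> G" using \<open>G \<noteq> {}\<close> by auto
  then have G0: "(0, 0) \<in> G" by (rule linear_graph_zero[OF G])
  define L where "L = (\<lambda>(u, b). b - p (u - z)) ` G"
  have sep: "b - p (u - z) \<le> p (v + z) - b'" if "(u, b) \<in> G" "(v, b') \<in> G" for u b v b'
  proof -
    have "b + b' \<le> p (u + v)" using dom[OF linear_graph_add[OF G that]] .
    also have "\<dots> = p ((u - z) + (v + z))" by (simp add: algebra_simps)
    also have "\<dots> \<le> p (u - z) + p (v + z)" by (rule sublinear_add[OF p])
    finally show ?thesis by simp
  qed
  have "bdd_above L"
    unfolding L_def bdd_above_def using sep[OF _ G0] by fastforce
  then have below: "b - p (u - z) \<le> Sup L" if "(u, b) \<in> G" for u b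
    by (rule cSup_upper[rotated]) (use that L_def in force)
  have above: "Sup L \<le> p (v + z) - b" if "(v, b) \<in> G" for v b
    by (rule cSup_least) (use G0 sep[OF _ that] L_def in auto)
  have rescale: "p (y + s *\<^sub>R w) = s * p ((1 / s) *\<^sub>R y + w)" if "0 < s" for y w s
    using sublinear_scaleR[OF p that, of "(1 / s) *\<^sub>R y + w"] that
    by (simp add: scaleR_add_right)
  fix y a and t :: real
  assume ya: "(y, a) \<in> G"
  consider "t = 0" | "0 < t" | "t < 0" by (cases t "0::real" rule: linorder_cases) auto
  then show "a + t * Sup L \<le> p (y + t *\<^sub>R z)"
  proof cases
    case 1
    then show ?thesis using dom[OF ya] by simp
  next
    case 2
    have "Sup L \<le> p ((1 / t) *\<^sub>R y + z) - a / t"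
      using above[OF linear_graph_scaleR[OF G ya, of "1 / t"]] by simp
    then have "t * Sup L \<le> t * p ((1 / t) *\<^sub>R y + z) - a"
      using 2 by (simp add: field_simps)
    then show ?thesis using rescale[OF 2, of y z] by simp
  next
    case 3
    then obtain s where s: "0 < s" "t = - s" by (metis neg_0_less_iff_less minus_minus)
    have "a / s - p ((1 / s) *\<^sub>R y - z) \<le> Sup L"
      using below[OF linear_graph_scaleR[OF G ya, of "1 / s"]] by simp
    then have "a - s * p ((1 / s) *\<^sub>R y + - z) \<le> s * Sup L"
      using s(1) by (simp add: field_simps)
    then show ?thesis using rescale[OF s(1), of y "- z"] s(2) by simp
  qed
qed

lemma dominated_linear_graph_extend:
  assumes p: "sublinear p" and G: "linear_graph G" "G \<noteq> {}"
    and dom: "\<And>x a. (x, a) \<in> G \<Longrightarrow> a \<le> p x" and z: "\<And>a. (z, a) \<notin> G"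
  obtains G' where "linear_graph G'" "G \<subset> G'" "\<And>x a. (x, a) \<in> G' \<Longrightarrow> a \<le> p x"
proof -
  obtain c where c: "\<And>y a t. (y, a) \<in> G \<Longrightarrow> a + t * c \<le> p (y + t *\<^sub>R z)"
    using sublinear_extension_value[OF p G dom] by blast
  define G' where "G' = {(y + t *\<^sub>R z, a + t * c) | y a t. (y, a) \<in> G}"
  have "G \<subseteq> G'"
    unfolding G'_def by (force intro: exI[of _ 0])
  moreover have "(z, c) \<in> G'"
    using linear_graph_zero[OF G(1)] G(2) unfolding G'_def by (force intro!: exI[of _ 1])
  ultimately have "G \<subset> G'" using z by blast
  moreover have "linear_graph G'"
    unfolding G'_def using linear_graph_extend[OF G(1) z] .
  moreover have "a \<le> p x" if "(x, a) \<in> G'" for x a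
    using that c unfolding G'_def by blast
  ultimately show ?thesis using that by blast
qed

theorem hahn_banach_sublinear:
  assumes S: "subspace S" and p: "sublinear p"
    and f_add: "\<And>x y. x \<in> S \<Longrightarrow> y \<in> S \<Longrightarrow> f (x + y) = f x + f y"
    and f_scaleR: "\<And>c x. x \<in> S \<Longrightarrow> f (c *\<^sub>R x) = c * f x"
    and f_le: "\<And>x. x \<in> S \<Longrightarrow> f x \<le> p x"
  obtains g where "linear g" "\<And>x. g x \<le> p x" "\<And>x. x \<in> S \<Longrightarrow> g x = f x"
proof -
  define E where "E = {G. linear_graph G \<and> (\<forall>(x, a)\<in>G. a \<le> p x) \<and> (\<forall>x\<in>S. (x, f x) \<in> G)}"
  have "linear_graph ((\<lambda>x. (x, f x)) ` S)"
    unfolding linear_graph_def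
    by (auto simp: f_add f_scaleR subspace_add[OF S] subspace_scale[OF S]
        simp del: scaleR_conv_of_real)
  then have graph_f: "(\<lambda>x. (x, f x)) ` S \<in> E"
    unfolding E_def using f_le by auto
  have "\<exists>U\<in>E. \<forall>G\<in>C. G \<subseteq> U" if C: "C \<in> chains E" for C
  proof (cases "C = {}")
    case True
    then show ?thesis using graph_f by blast
  next
    case False
    have "linear_graph (\<Union>C)"
      by (rule linear_graph_Union_chain) (use chainsD[OF C] chainsD2[OF C] E_def in auto)
    then have "\<Union>C \<in> E"
      using chainsD2[OF C] False unfolding E_def by fast
    then show ?thesis by blast
  qed
  then obtain M where M: "M \<in> E" and max: "\<forall>G\<in>E. M \<subseteq> G \<longrightarrow> G = M"
    using Zorn_Lemma2[of E] by blast
  have M_graph: "linear_graph M" and M_le: "\<And>x a. (x, a) \<in> M \<Longrightarrow> a \<le> p x"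
    and M_ext: "\<And>x. x \<in> S \<Longrightarrow> (x, f x) \<in> M"
    using M unfolding E_def by auto
  have "M \<noteq> {}" using M_ext subspace_0[OF S] by blast
  have total: "\<exists>a. (x, a) \<in> M" for x
  proof (rule ccontr)
    assume "\<nexists>a. (x, a) \<in> M"
    then have x_new: "\<And>a. (x, a) \<notin> M" by blast
    obtain G where G: "linear_graph G" "M \<subset> G" and G_le: "\<And>x a. (x, a) \<in> G \<Longrightarrow> a \<le> p x"
      using dominated_linear_graph_extend[OF p M_graph \<open>M \<noteq> {}\<close> M_le x_new] by blast
    have "\<forall>x\<in>S. (x, f x) \<in> G" using M_ext G(2) by blast
    then have "G \<in> E" using G(1) G_le unfolding E_def by auto
    then show False using max G(2) by blast
  qed
  obtain g where g: "linear g" "\<And>x. (x, g x) \<in> M"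
    using linear_graph_is_linear[OF M_graph total] by blast
  show ?thesis
  proof
    show "g x \<le> p x" for x using M_le[OF g(2)] .
    show "g x = f x" if "x \<in> S" for x
      using linear_graph_unique[OF M_graph g(2) M_ext[OF that]] .
  qed (fact g(1))
qed

corollary linear_attains_sublinear:
  assumes p: "sublinear p"
  obtains g where "linear g" "\<And>x. g x \<le> p x" "g z = p z"
proof -
  obtain h where h: "linear h" "p z * h z = p z"
  proof (cases "z = 0")
    case True
    then show ?thesis using that[of "\<lambda>_. 0"] sublinear_0[OF p] by (simp add: linear_zero)
  next
    case False
    then have "independent {z}" by (simp add: independent_insert)
    then obtain h where "linear h" "h z = (1 :: real)"
      using linear_independent_extend[of "{z}" "\<lambda>_. 1 :: real"] by blast
    then show ?thesis using that by simp
  qed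
  have "p z * h y \<le> p y" if y: "y \<in> span {z}" for y
  proof -
    obtain t where "y = t *\<^sub>R z" using y by (auto simp: span_singleton)
    then have "p z * h y = t * (p z * h z)"
      using linear_scale[OF h(1), of t z] by simp
    also have "\<dots> = t * p z" by (simp only: h(2))
    also have "\<dots> \<le> p y" using sublinear_scaleR_ge[OF p, of t z] \<open>y = t *\<^sub>R z\<close> by simp
    finally show ?thesis .
  qed
  then obtain g where g: "linear g" "\<And>x. g x \<le> p x" "\<And>x. x \<in> span {z} \<Longrightarrow> g x = p z * h x"
    using hahn_banach_sublinear[OF subspace_span[of "{z}"] p, where f = "\<lambda>y. p z * h y"]
    by (simp add: linear_add[OF h(1)] linear_scale[OF h(1)] distrib_left mult.left_commute) blast
  show ?thesis
    by (rule that[OF g(1,2)]) (simp add: g(3) span_base h(2))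
qed

lemma cone_dist_le: "q \<in> C \<Longrightarrow> cone_dist C x \<le> norm (x + q)"
  unfolding cone_dist_def by (rule cInf_lower) (auto intro: bdd_belowI[of _ 0])

lemma cone_dist_greatest:
  "C \<noteq> {} \<Longrightarrow> (\<And>q. q \<in> C \<Longrightarrow> a \<le> norm (x + q)) \<Longrightarrow> a \<le> cone_dist C x"
  unfolding cone_dist_def by (rule cInf_greatest) auto

lemma cone_dist_le_norm: "0 \<in> C \<Longrightarrow> cone_dist C x \<le> norm x"
  using cone_dist_le[of 0 C x] by simp

lemma cone_dist_antimono: "C \<subseteq> D \<Longrightarrow> C \<noteq> {} \<Longrightarrow> cone_dist D x \<le> cone_dist C x"
  by (rule cone_dist_greatest) (auto intro: cone_dist_le)

lemma cone_dist_add: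
  assumes C: "convex_cone C"
  shows "cone_dist C (x + y) \<le> cone_dist C x + cone_dist C y"
proof -
  have C_ne: "C \<noteq> {}" using convex_cone_nonempty[OF C] .
  have "cone_dist C (x + y) - cone_dist C y \<le> norm (x + p)" if p: "p \<in> C" for p
  proof -
    have "cone_dist C (x + y) - norm (x + p) \<le> norm (y + q)" if q: "q \<in> C" for q
    proof -
      have "cone_dist C (x + y) \<le> norm ((x + p) + (y + q))"
        using cone_dist_le[OF convex_cone_add[OF C p q], of "x + y"] by (simp add: algebra_simps)
      also have "\<dots> \<le> norm (x + p) + norm (y + q)" by (rule norm_triangle_ineq)
      finally show ?thesis by simp
    qed
    then have "cone_dist C (x + y) - norm (x + p) \<le> cone_dist C y"
      by (rule cone_dist_greatest[OF C_ne])
    then show ?thesis by simp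
  qed
  then have "cone_dist C (x + y) - cone_dist C y \<le> cone_dist C x"
    by (rule cone_dist_greatest[OF C_ne])
  then show ?thesis by simp
qed

lemma cone_dist_scaleR:
  assumes C: "convex_cone C" and c: "0 < c"
  shows "cone_dist C (c *\<^sub>R x) = c * cone_dist C x"
proof -
  have C_ne: "C \<noteq> {}" using convex_cone_nonempty[OF C] .
  have scaled: "norm (c *\<^sub>R x + q) = c * norm (x + (1 / c) *\<^sub>R q)" for q
  proof -
    have "c *\<^sub>R x + q = c *\<^sub>R (x + (1 / c) *\<^sub>R q)" using c by (simp add: scaleR_add_right)
    then show ?thesis using c by simp
  qed
  have "cone_dist C (c *\<^sub>R x) / c \<le> norm (x + q)" if q: "q \<in> C" for q
    using cone_dist_le[OF convex_cone_scaleR[OF C _ q], of c "c *\<^sub>R x"] c scaled[of "c *\<^sub>R q"]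
    by (simp add: field_simps)
  then have "cone_dist C (c *\<^sub>R x) / c \<le> cone_dist C x"
    by (rule cone_dist_greatest[OF C_ne])
  moreover have "c * cone_dist C x \<le> norm (c *\<^sub>R x + q)" if q: "q \<in> C" for q
    using cone_dist_le[OF convex_cone_scaleR[OF C _ q], of "1 / c" x] c scaled[of q]
    by simp
  then have "c * cone_dist C x \<le> cone_dist C (c *\<^sub>R x)"
    by (rule cone_dist_greatest[OF C_ne])
  ultimately show ?thesis using c by (simp add: field_simps)
qed

lemma sublinear_cone_dist: "convex_cone C \<Longrightarrow> sublinear (cone_dist C)"
  unfolding sublinear_def using cone_dist_add cone_dist_scaleR by blast

lemma convex_cone_subspace_Int: "subspace S \<Longrightarrow> convex_cone P \<Longrightarrow> convex_cone (S \<inter> P)"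
  by (simp add: convex_cone_iff subspace_0 subspace_add subspace_scale)

lemma convex_cone_if_closed_proper_cone: "closed_proper_cone P \<Longrightarrow> convex_cone P"
  unfolding closed_proper_cone_def convex_cone_iff by blast

lemma pos_contr_functional_iff_le_cone_dist:
  assumes S: "subspace S" and P: "convex_cone P"
  shows "pos_contr_functional S P f \<longleftrightarrow>
    (\<forall>x\<in>S. \<forall>y\<in>S. f (x + y) = f x + f y) \<and> (\<forall>c. \<forall>x\<in>S. f (c *\<^sub>R x) = c * f x) \<and>
    (\<forall>x\<in>S. f x \<le> cone_dist (S \<inter> P) x)"
proof -
  have SP: "convex_cone (S \<inter> P)" using convex_cone_subspace_Int[OF S P] .
  have f_le_iff: "(\<forall>x\<in>S. f x \<le> cone_dist (S \<inter> P) x) \<longleftrightarrow>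
      (\<forall>q\<in>S \<inter> P. 0 \<le> f q) \<and> (\<forall>x\<in>S. \<bar>f x\<bar> \<le> norm x)"
    if f_add: "\<And>x y. x \<in> S \<Longrightarrow> y \<in> S \<Longrightarrow> f (x + y) = f x + f y"
      and f_scaleR: "\<And>c x. x \<in> S \<Longrightarrow> f (c *\<^sub>R x) = c * f x"
  proof (intro iffI conjI ballI)
    assume le: "\<forall>x\<in>S. f x \<le> cone_dist (S \<inter> P) x"
    have f_le_norm: "f x \<le> norm x" if "x \<in> S" for x
      using le that cone_dist_le_norm[OF convex_cone_contains_0[OF SP]] by (meson order_trans)
    have f_neg: "f (- x) = - f x" if "x \<in> S" for x
      using f_scaleR[OF that, of "-1"] by simp
    show "0 \<le> f q" if q: "q \<in> S \<inter> P" for q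
      using le cone_dist_le[OF q, of "- q"] f_neg q subspace_neg[OF S] by fastforce
    show "\<bar>f x\<bar> \<le> norm x" if "x \<in> S" for x
      using f_le_norm[OF that] f_le_norm[OF subspace_neg[OF S that]] f_neg[OF that] by simp
  next
    fix x assume pos_contr: "(\<forall>q\<in>S \<inter> P. 0 \<le> f q) \<and> (\<forall>x\<in>S. \<bar>f x\<bar> \<le> norm x)" and x: "x \<in> S"
    show "f x \<le> cone_dist (S \<inter> P) x"
    proof (rule cone_dist_greatest[OF convex_cone_nonempty[OF SP]])
      fix q assume q: "q \<in> S \<inter> P"
      have "f x \<le> f (x + q)" using pos_contr q f_add[OF x] by simp
      also have "\<dots> \<le> norm (x + q)" using pos_contr q x subspace_add[OF S] by fastforce
      finally show "f x \<le> norm (x + q)" .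
    qed
  qed
  show ?thesis
    unfolding pos_contr_functional_def using f_le_iff by blast
qed

corollary pos_contr_functional_UNIV_iff:
  assumes "convex_cone P" and "linear g"
  shows "pos_contr_functional UNIV P g \<longleftrightarrow> (\<forall>x. g x \<le> cone_dist P x)"
  using pos_contr_functional_iff_le_cone_dist[OF subspace_UNIV assms(1), of g]
    linear_add[OF assms(2)] linear_scale[OF assms(2)] by simp

lemma pos_contr_extension_if_cone_dist_eq:
  assumes P: "convex_cone P" and S: "subspace S"
    and eq: "\<forall>x\<in>S. cone_dist P x = cone_dist (S \<inter> P) x"
    and f: "pos_contr_functional S P f"
  obtains g where "linear g" "pos_contr_functional UNIV P g" "\<And>x. x \<in> S \<Longrightarrow> g x = f x"
proof -
  have f_add: "\<And>x y. x \<in> S \<Longrightarrow> y \<in> S \<Longrightarrow> f (x + y) = f x + f y"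
    and f_scaleR: "\<And>c x. x \<in> S \<Longrightarrow> f (c *\<^sub>R x) = c * f x"
    and f_le: "\<And>x. x \<in> S \<Longrightarrow> f x \<le> cone_dist P x"
    using f eq unfolding pos_contr_functional_iff_le_cone_dist[OF S P] by auto
  obtain g where "linear g" "\<And>x. g x \<le> cone_dist P x" "\<And>x. x \<in> S \<Longrightarrow> g x = f x"
    using hahn_banach_sublinear[OF S sublinear_cone_dist[OF P] f_add f_scaleR f_le] by blast
  with that show ?thesis using pos_contr_functional_UNIV_iff[OF P] by blast
qed

lemma cone_dist_eq_if_pos_contr_extensions:
  assumes P: "convex_cone P" and S: "subspace S"
    and ext: "\<And>f. pos_contr_functional S P f \<Longrightarrow>
      \<exists>g. linear g \<and> pos_contr_functional UNIV P g \<and> (\<forall>x\<in>S. g x = f x)"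
    and z: "z \<in> S"
  shows "cone_dist P z = cone_dist (S \<inter> P) z"
proof (rule antisym)
  show "cone_dist P z \<le> cone_dist (S \<inter> P) z"
    using cone_dist_antimono convex_cone_nonempty[OF convex_cone_subspace_Int[OF S P]] by blast
next
  obtain h where h: "linear h" "\<And>x. h x \<le> cone_dist (S \<inter> P) x" "h z = cone_dist (S \<inter> P) z"
    using linear_attains_sublinear[OF sublinear_cone_dist[OF convex_cone_subspace_Int[OF S P]]] by blast
  have "pos_contr_functional S P h"
    unfolding pos_contr_functional_iff_le_cone_dist[OF S P]
    using h linear_add[OF h(1)] linear_scale[OF h(1)] by simp
  then obtain g where "linear g" "pos_contr_functional UNIV P g" "\<forall>x\<in>S. g x = h x"
    using ext by blast
  then show "cone_dist (S \<inter> P) z \<le> cone_dist P z"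
    using pos_contr_functional_UNIV_iff[OF P] h(3) z by metis
qed

theorem mainTheorem7:
  fixes P :: "'a::real_normed_vector set" and S :: "'a set"
  assumes "closed_proper_cone P"
    and "normal_cone P"
    and "subspace S"
  shows "(\<forall>f. pos_contr_functional S P f \<longrightarrow>
            (\<exists>g. linear g \<and> pos_contr_functional UNIV P g \<and> (\<forall>x\<in>S. g x = f x)))
         \<longleftrightarrow> (\<forall>x\<in>S. cone_dist P x = cone_dist (S \<inter> P) x)"
proof -
  have P: "convex_cone P" using convex_cone_if_closed_proper_cone[OF assms(1)] .
  show ?thesis
  proof (intro iffI allI impI ballI)
    fix z assume "\<forall>f. pos_contr_functional S P f \<longrightarrow>
        (\<exists>g. linear g \<and> pos_contr_functional UNIV P g \<and> (\<forall>x\<in>S. g x = f x))" and "z \<in> S"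
    then show "cone_dist P z = cone_dist (S \<inter> P) z"
      using cone_dist_eq_if_pos_contr_extensions[OF P assms(3)] by blast
  next
    fix f assume "\<forall>x\<in>S. cone_dist P x = cone_dist (S \<inter> P) x" and "pos_contr_functional S P f"
    then show "\<exists>g. linear g \<and> pos_contr_functional UNIV P g \<and> (\<forall>x\<in>S. g x = f x)"
      using pos_contr_extension_if_cone_dist_eq[OF P assms(3)] by metis
  qed
qed

end
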